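(* Let $\kappa>\omega$ be a cardinal, $S_\kappa$ the group of all permutations of $\kappa$, and $\mathcal{E}$ the coarse structure on $\kappa$ with base $\{E_H: H\subseteq S_\kappa \text{ finite}, \ \mathrm{id}\in H\}$, $E_H=\{(x,y):y\in Hx\}$. Let $\mathcal{F}$ be the discrete coarse structure on $\kappa$ defined by the bornology $[\kappa]^{<\kappa}$ and $\mathcal{E}'=\mathcal{F}\vee\mathcal{E}$. Then: the bounded sets of $(\kappa,\mathcal{E})$ are exactly the finite subsets; $(\kappa,\mathcal{E})$ is ultranormal but not extremely normal; $\mathcal{E}\subsetneq\mathcal{E}'$; and $(\kappa,\mathcal{E}')$ is extremely normal but not maximal.
   Context: A ballean $(X,\mathcal{E})$ is a set with a coarse structure. $E[x]=\{y:(x,y)\in E\}$, $E[A]=\bigcup_{a\in A}E[a]$. $Y$ is bounded if $Y\subseteq E[x]$ for some $x$ and $E\in\mathcal{E}$. $A$ is large if $X=E[A]$ for some $E$. Subsets $A,B$ are asymptotically disjoint if $E[A]\cap E[B]$ is bounded for every $E$. An unbounded ballean is ultranormal if no two unbounded subsets are asymptotically disjoint; extremely normal if every unbounded subset is large; maximal if $X$ is bounded in every coarse structure strictly containing $\mathcal{E}$. For a bornology $\mathcal{B}$ on $X$, the discrete coarse structure defined by $\mathcal{B}$ has base $\{E_B:B\in\mathcal{B}\}$ where $E_B[x]=B$ for $x\in B$ and $E_B[x]=\{x\}$ for $x\notin B$. $[\kappa]^{<\kappa}$ is the family of subsets of $\kappa$ of cardinality $<\kappa$. For coarse structures $\mathcal{E}_1,\mathcal{E}_2$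 on $X$, $\mathcal{E}_1\vee\mathcal{E}_2$ is the smallest coarse structure containing both. *)

theory Defs
  imports Main "HOL-Library.Countable_Set"
begin

definition entourage :: "'a set \<Rightarrow> ('a \<times> 'a) set \<Rightarrow> bool" where
  "entourage X eps \<longleftrightarrow> Id_on X \<subseteq> eps \<and> eps \<subseteq> X \<times> X"

definition coarse_structure :: "'a set \<Rightarrow> ('a \<times> 'a) set set \<Rightarrow> bool" where
  "coarse_structure X CE \<longleftrightarrow>
     Id_on X \<in> CE \<and> (\<forall>e\<in>CE. entourage X e) \<and>
     (\<forall>e\<in>CE. \<forall>d\<in>CE. e O d \<in> CE) \<and>
     (\<forall>e\<in>CE. e\<inverse> \<in> CE) \<and>
     (\<forall>e\<in>CE. \<forall>d. entourage X d \<and> d \<subseteq> e \<longrightarrow> d \<in> CE)"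

definition bounded_in :: "'a set \<Rightarrow> ('a \<times> 'a) set set \<Rightarrow> 'a set \<Rightarrow> bool" where
  "bounded_in X CE Y \<longleftrightarrow> (\<exists>x\<in>X. \<exists>e\<in>CE. Y \<subseteq> e `` {x})"

definition large_in :: "'a set \<Rightarrow> ('a \<times> 'a) set set \<Rightarrow> 'a set \<Rightarrow> bool" where
  "large_in X CE A \<longleftrightarrow> (\<exists>e\<in>CE. X = e `` A)"

definition asymp_disjoint :: "'a set \<Rightarrow> ('a \<times> 'a) set set \<Rightarrow> 'a set \<Rightarrow> 'a set \<Rightarrow> bool" where
  "asymp_disjoint X CE A B \<longleftrightarrow> (\<forall>e\<in>CE. bounded_in X CE (e `` A \<inter> e `` B))"

definition unbounded_ballean :: "'a set \<Rightarrow> ('a \<times> 'a) set set \<Rightarrow> bool" where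
  "unbounded_ballean X CE \<longleftrightarrow> \<not> bounded_in X CE X"

definition ultranormal :: "'a set \<Rightarrow> ('a \<times> 'a) set set \<Rightarrow> bool" where
  "ultranormal X CE \<longleftrightarrow> unbounded_ballean X CE \<and>
     (\<forall>A B. A \<subseteq> X \<and> B \<subseteq> X \<and> \<not> bounded_in X CE A \<and> \<not> bounded_in X CE B
        \<longrightarrow> \<not> asymp_disjoint X CE A B)"

definition extremely_normal :: "'a set \<Rightarrow> ('a \<times> 'a) set set \<Rightarrow> bool" where
  "extremely_normal X CE \<longleftrightarrow> unbounded_ballean X CE \<and>
     (\<forall>A. A \<subseteq> X \<and> \<not> bounded_in X CE A \<longrightarrow> large_in X CE A)"

definition maximal_ballean :: "'a set \<Rightarrow> ('a \<times> 'a) set set \<Rightarrow> bool" where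
  "maximal_ballean X CE \<longleftrightarrow> unbounded_ballean X CE \<and>
     (\<forall>CE'. coarse_structure X CE' \<and> CE \<subset> CE' \<longrightarrow> bounded_in X CE' X)"

definition E_bor :: "'a set \<Rightarrow> 'a set \<Rightarrow> ('a \<times> 'a) set" where
  "E_bor X B = (B \<times> B) \<union> Id_on X"

definition discrete_coarse :: "'a set \<Rightarrow> 'a set set \<Rightarrow> ('a \<times> 'a) set set" where
  "discrete_coarse X Bor = {e. entourage X e \<and> (\<exists>B\<in>Bor. e \<subseteq> E_bor X B)}"

definition coarse_join :: "'a set \<Rightarrow> ('a \<times> 'a) set set \<Rightarrow> ('a \<times> 'a) set set \<Rightarrow> ('a \<times> 'a) set set" where
  "coarse_join X CE1 CE2 = \<Inter> {C. coarse_structure X C \<and> CE1 \<subseteq> C \<and> CE2 \<subseteq> C}"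

(* The permutation coarse structure on a type (kappa = |UNIV|):
   base {E_H : H finite set of permutations, id \<in> H}, E_H = {(x,y). y \<in> H x} *)
definition E_perm :: "('a \<Rightarrow> 'a) set \<Rightarrow> ('a \<times> 'a) set" where
  "E_perm H = {(x, y). \<exists>h\<in>H. y = h x}"

definition perm_coarse :: "('a \<times> 'a) set set" where
  "perm_coarse = {e. entourage UNIV e \<and>
     (\<exists>H. finite H \<and> id \<in> H \<and> (\<forall>h\<in>H. bij h) \<and> e \<subseteq> E_perm H)}"

definition small_sets :: "'a set set" where
  "small_sets = {A. (card_of A, card_of (UNIV :: 'a set)) \<in> ordLess}"

end

theory Submission
  imports Defs "HOL-Library.Countable_Set_Type" "HOL-Combinatorics.Transposition"
begin

(* Entourages of the permutation coarse structure have finite fibres, so its bounded sets are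
   the finite ones and every large set has cardinality kappa, while any two infinite sets are
   made to meet in infinitely many points by a single involution.  Once the squares S \<times> S of
   small sets are added, every set of cardinality kappa becomes large, since an involution
   exchanges its complement with a part of it.  Every entourage of the join lies in
   S \<times> S \<union> g with S small and g of finite fibres; allowing countable fibres instead still gives
   an unbounded coarse structure, and it contains an equivalence relation with countably
   infinite classes, which the join does not. *)

unbundle cardinal_syntax

section \<open>Small sets\<close>

lemma mem_small_sets_iff: "A \<in> small_sets \<longleftrightarrow> |A| <o |UNIV :: 'a set|"
  for A :: "'a set"
  by (simp add: small_sets_def)

lemma countable_in_small_sets:
  fixes A :: "'a set"
  assumes "uncountable (UNIV :: 'a set)" and "countable A"
  shows "A \<in> small_sets"
  unfolding mem_small_sets_iff
  using assms countable_ordLeq[of "UNIV :: 'a set" A]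
  by (metis card_of_Well_order not_ordLeq_iff_ordLess)

lemma small_sets_subset: "A \<subseteq> B \<Longrightarrow> B \<in> small_sets \<Longrightarrow> A \<in> small_sets"
  unfolding small_sets_def by (metis card_of_mono1 ordLeq_ordLess_trans mem_Collect_eq)

lemma small_sets_Un:
  fixes A B :: "'a set"
  assumes "infinite (UNIV :: 'a set)" "A \<in> small_sets" "B \<in> small_sets"
  shows "A \<union> B \<in> small_sets"
  using assms card_of_Un_ordLess_infinite by (auto simp: mem_small_sets_iff)

lemma UNIV_not_in_small_sets: "UNIV \<notin> small_sets"
  by (simp add: small_sets_def ordLess_irreflexive)

lemma small_sets_UN_countable:
  fixes S :: "'a set" and C :: "'a \<Rightarrow> 'a set"
  assumes unc: "uncountable (UNIV :: 'a set)" and S: "S \<in> small_sets"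
    and C: "\<And>s. s \<in> S \<Longrightarrow> countable (C s)"
  shows "(\<Union>s\<in>S. C s) \<in> small_sets"
proof -
  obtain N :: "'a set" where N: "countable N" "infinite N"
    using unc by (meson countable_finite infinite_countable_subset')
  let ?B = "S \<union> N"
  have "|\<Union>s\<in>S. C s| \<le>o |?B|"
  proof (rule card_of_UNION_ordLeq_infinite)
    show "infinite ?B" using N by simp
    show "|S| \<le>o |?B|" by (rule card_of_mono1) simp
    show "\<forall>s\<in>S. |C s| \<le>o |?B|"
      using C N countable_card_of_nat infinite_iff_card_of_nat
      by (metis ordLeq_transitive card_of_mono1 sup_ge2)
  qed
  moreover have "?B \<in> small_sets"
    using small_sets_Un[OF _ S countable_in_small_sets[OF unc N(1)]] unc countable_finite by blast
  ultimately show ?thesis unfolding mem_small_sets_iff by (rule ordLeq_ordLess_trans)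
qed

lemma inj_into_not_small_set:
  fixes A :: "'a set"
  assumes "A \<notin> small_sets"
  obtains f where "inj_on f (- A)" "f ` (- A) \<subseteq> A"
proof -
  have "|- A| \<le>o |A|"
    using assms card_of_mono1[of "- A" "UNIV :: 'a set"]
    by (metis card_of_Well_order mem_small_sets_iff not_ordLeq_iff_ordLess ordLeq_transitive subset_UNIV)
  then show thesis using that card_of_ordLeq[of "- A" A] by blast
qed

section \<open>The permutation coarse structure\<close>

lemma bij_extending_inj_on:
  assumes "inj_on f P" "f ` P \<inter> P = {}"
  obtains h where "bij h" "\<And>x. x \<in> P \<Longrightarrow> h x = f x"
proof -
  define h where "h x = (if x \<in> P then f x else if x \<in> f ` P then the_inv_into P f x else x)" for x
  have h_f: "h (f x) = x" if "x \<in> P" for x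
    using assms that by (auto simp: h_def the_inv_into_f_f)
  have "h (h x) = x" for x
  proof -
    consider "x \<in> P" | "x \<in> f ` P" | "x \<notin> P" "x \<notin> f ` P" by blast
    then show ?thesis
    proof cases
      case 1
      then show ?thesis using h_f by (simp add: h_def)
    next
      case 2
      then obtain y where "y \<in> P" "x = f y" by blast
      then have "h x = y" "h y = x" using h_f by (simp_all add: h_def)
      then show ?thesis by simp
    next
      case 3
      then show ?thesis by (simp add: h_def)
    qed
  qed
  then have "bij h" by (rule involuntory_imp_bij)
  then show thesis using that by (simp add: h_def)
qed

lemma coarse_join_least:
  "coarse_structure X C \<Longrightarrow> CE1 \<subseteq> C \<Longrightarrow> CE2 \<subseteq> C \<Longrightarrow> coarse_join X CE1 CE2 \<subseteq> C"
  unfolding coarse_join_def by blast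

lemma coarse_join_upper1: "CE1 \<subseteq> coarse_join X CE1 CE2"
  unfolding coarse_join_def by blast

lemma coarse_join_upper2: "CE2 \<subseteq> coarse_join X CE1 CE2"
  unfolding coarse_join_def by blast

lemma bounded_in_mono: "CE \<subseteq> CE' \<Longrightarrow> bounded_in X CE Y \<Longrightarrow> bounded_in X CE' Y"
  unfolding bounded_in_def by blast

lemma E_bor_in_discrete_coarse: "B \<subseteq> X \<Longrightarrow> B \<in> Bor \<Longrightarrow> E_bor X B \<in> discrete_coarse X Bor"
  unfolding discrete_coarse_def entourage_def E_bor_def by auto

lemma Image_E_perm: "E_perm H `` A = (\<Union>h\<in>H. h ` A)"
  unfolding E_perm_def by auto

lemma E_perm_in_perm_coarse:
  "finite H \<Longrightarrow> id \<in> H \<Longrightarrow> (\<And>h. h \<in> H \<Longrightarrow> bij h) \<Longrightarrow> E_perm H \<in> perm_coarse"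
  unfolding perm_coarse_def entourage_def E_perm_def by (auto intro: bexI[of _ id])

lemma perm_coarse_Image_subset:
  assumes "e \<in> perm_coarse"
  obtains H where "finite H" "\<And>A. e `` A \<subseteq> (\<Union>h\<in>H. h ` A)"
proof -
  obtain H where "finite H" "e \<subseteq> E_perm H" using assms unfolding perm_coarse_def by blast
  then show thesis using that[of H] by (metis Image_E_perm Image_mono order_refl)
qed

lemma finite_Image_perm_coarse: "e \<in> perm_coarse \<Longrightarrow> finite A \<Longrightarrow> finite (e `` A)"
  by (metis finite_UN_I finite_imageI finite_subset perm_coarse_Image_subset)

lemma countable_Image_perm_coarse: "e \<in> perm_coarse \<Longrightarrow> countable A \<Longrightarrow> countable (e `` A)"
  by (metis countable_UN countable_finite countable_image countable_subset perm_coarse_Image_subset)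

lemma bounded_in_perm_coarse_iff: "bounded_in UNIV perm_coarse Y \<longleftrightarrow> finite Y"
proof
  assume "bounded_in UNIV perm_coarse Y"
  then obtain x e where "e \<in> perm_coarse" "Y \<subseteq> e `` {x}" unfolding bounded_in_def by blast
  then show "finite Y" using finite_Image_perm_coarse finite_subset by blast
next
  assume "finite Y"
  fix x
  let ?H = "insert id (transpose x ` Y)"
  have "E_perm ?H \<in> perm_coarse"
    using \<open>finite Y\<close> by (intro E_perm_in_perm_coarse) auto
  moreover have "Y \<subseteq> E_perm ?H `` {x}"
  proof
    fix y assume "y \<in> Y"
    then have "transpose x y \<in> ?H" by blast
    then show "y \<in> E_perm ?H `` {x}" unfolding Image_E_perm
      by (intro UN_I[of "transpose x y"]) auto
  qed
  ultimately show "bounded_in UNIV perm_coarse Y" unfolding bounded_in_def by blast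
qed

lemma Image_E_perm_id_bij: "E_perm {id, h} `` A = A \<union> h ` A"
  by (auto simp: Image_E_perm)

lemma E_perm_id_bij_in_perm_coarse: "bij h \<Longrightarrow> E_perm {id, h} \<in> perm_coarse"
  by (rule E_perm_in_perm_coarse) auto

lemma bij_infinite_image_Int:
  fixes A B :: "'a set"
  assumes "infinite A" "infinite B"
  obtains h where "bij h" "infinite (h ` A \<inter> B)"
proof (cases "finite (A \<inter> B)")
  case False
  then show thesis using that[of id] by simp
next
  case True
  then have "infinite (A - B)" using assms(1) by (metis Un_Diff_Int finite_Un)
  then obtain a :: "nat \<Rightarrow> 'a" where a: "inj a" "range a \<subseteq> A - B"
    using infinite_countable_subset by blast
  obtain b :: "nat \<Rightarrow> 'a" where b: "inj b" "range b \<subseteq> B"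
    using infinite_countable_subset[OF assms(2)] by blast
  let ?f = "b \<circ> inv a"
  have "bij_betw ?f (range a) (range b)"
    using bij_betw_inv_into[OF inj_on_imp_bij_betw[OF a(1)]] inj_on_imp_bij_betw[OF b(1)]
    by (rule bij_betw_trans)
  moreover have "range b \<inter> range a = {}" using a(2) b(2) by blast
  ultimately obtain h where h: "bij h" "\<And>x. x \<in> range a \<Longrightarrow> h x = ?f x"
    by (metis bij_betw_def bij_extending_inj_on)
  have "range b \<subseteq> h ` A \<inter> B"
  proof
    fix z assume "z \<in> range b"
    then obtain i where "z = b i" by blast
    then have "z = h (a i)" using h(2) a(1) by simp
    then show "z \<in> h ` A \<inter> B" using a(2) b(2) \<open>z = b i\<close> by blast
  qed
  moreover have "infinite (range b)" using b(1) by (simp add: range_inj_infinite)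
  ultimately show thesis using that h(1) finite_subset by blast
qed

lemma ultranormal_perm_coarse:
  assumes "infinite (UNIV :: 'a set)"
  shows "ultranormal (UNIV :: 'a set) perm_coarse"
  unfolding ultranormal_def unbounded_ballean_def asymp_disjoint_def bounded_in_perm_coarse_iff
proof (intro conjI allI impI assms notI)
  fix A B :: "'a set"
  assume "A \<subseteq> UNIV \<and> B \<subseteq> UNIV \<and> infinite A \<and> infinite B"
  then obtain h where h: "bij h" "infinite (h ` A \<inter> B)" using bij_infinite_image_Int by blast
  assume "\<forall>e\<in>perm_coarse. finite (e `` A \<inter> e `` B)"
  then have "finite (E_perm {id, h} `` A \<inter> E_perm {id, h} `` B)"
    using E_perm_id_bij_in_perm_coarse[OF h(1)] by blast
  moreover have "h ` A \<inter> B \<subseteq> E_perm {id, h} `` A \<inter> E_perm {id, h} `` B"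
    by (auto simp: Image_E_perm_id_bij)
  ultimately show False using h(2) finite_subset by blast
qed

lemma not_extremely_normal_perm_coarse:
  assumes "uncountable (UNIV :: 'a set)"
  shows "\<not> extremely_normal (UNIV :: 'a set) perm_coarse"
proof
  obtain N :: "'a set" where N: "countable N" "infinite N"
    using assms by (meson countable_finite infinite_countable_subset')
  assume "extremely_normal (UNIV :: 'a set) perm_coarse"
  then have "large_in UNIV perm_coarse N"
    using N(2) unfolding extremely_normal_def bounded_in_perm_coarse_iff by blast
  then obtain e where "e \<in> perm_coarse" "UNIV = e `` N" unfolding large_in_def by blast
  then show False using assms N(1) countable_Image_perm_coarse by metis
qed

section \<open>Coarse structures modulo small sets\<close>

definition fibrewise :: "('a set \<Rightarrow> bool) \<Rightarrow> ('a \<times> 'a) set \<Rightarrow> bool" where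
  "fibrewise Q g \<longleftrightarrow> (\<forall>x. Q (g `` {x}) \<and> Q (g\<inverse> `` {x}))"

definition coarse_mod_small :: "('a set \<Rightarrow> bool) \<Rightarrow> ('a \<times> 'a) set set" where
  "coarse_mod_small Q =
     {e. entourage UNIV e \<and> (\<exists>S g. S \<in> small_sets \<and> fibrewise Q g \<and> e \<subseteq> S \<times> S \<union> g)}"

lemma fibrewise_Id: "(\<And>x. Q {x}) \<Longrightarrow> fibrewise Q Id"
  by (simp add: fibrewise_def)

lemma fibrewise_converse: "fibrewise Q g \<Longrightarrow> fibrewise Q (g\<inverse>)"
  by (simp add: fibrewise_def)

lemma fibrewise_relcomp:
  assumes Q_UN: "\<And>I A. Q I \<Longrightarrow> (\<And>i. i \<in> I \<Longrightarrow> Q (A i)) \<Longrightarrow> Q (\<Union>i\<in>I. A i)"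
    and "fibrewise Q g" "fibrewise Q g'"
  shows "fibrewise Q (g O g')"
proof -
  have "(g O g') `` {x} = (\<Union>y\<in>g `` {x}. g' `` {y})"
    and "(g O g')\<inverse> `` {x} = (\<Union>y\<in>g'\<inverse> `` {x}. g\<inverse> `` {y})" for x
    by auto
  moreover have "Q (\<Union>y\<in>g `` {x}. g' `` {y})" "Q (\<Union>y\<in>g'\<inverse> `` {x}. g\<inverse> `` {y})" for x
    using assms(2,3) unfolding fibrewise_def by (blast intro: Q_UN)+
  ultimately show ?thesis unfolding fibrewise_def by simp
qed

lemma coarse_mod_smallI:
  "entourage UNIV e \<Longrightarrow> S \<in> small_sets \<Longrightarrow> fibrewise Q g \<Longrightarrow> e \<subseteq> S \<times> S \<union> g
    \<Longrightarrow> e \<in> coarse_mod_small Q"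
  unfolding coarse_mod_small_def by blast

lemma coarse_mod_smallE:
  assumes "e \<in> coarse_mod_small Q"
  obtains S g where "entourage UNIV e" "S \<in> small_sets" "fibrewise Q g" "e \<subseteq> S \<times> S \<union> g"
  using assms unfolding coarse_mod_small_def by blast

lemma coarse_mod_small_mono:
  assumes "\<And>A. Q A \<Longrightarrow> Q' A"
  shows "coarse_mod_small Q \<subseteq> coarse_mod_small Q'"
proof
  fix e assume "e \<in> coarse_mod_small Q"
  then obtain S g where "entourage UNIV e" "S \<in> small_sets" "fibrewise Q g" "e \<subseteq> S \<times> S \<union> g"
    by (rule coarse_mod_smallE)
  moreover have "fibrewise Q' g" using \<open>fibrewise Q g\<close> assms by (simp add: fibrewise_def)
  ultimately show "e \<in> coarse_mod_small Q'" by (blast intro: coarse_mod_smallI)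
qed

lemma small_sets_Image:
  fixes S :: "'a set" and g :: "('a \<times> 'a) set"
  assumes "uncountable (UNIV :: 'a set)" "S \<in> small_sets" "\<And>x. countable (g `` {x})"
  shows "g `` S \<in> small_sets"
proof -
  have "g `` S = (\<Union>x\<in>S. g `` {x})" by blast
  then show ?thesis using small_sets_UN_countable[OF assms(1,2), of "\<lambda>x. g `` {x}"] assms(3)
    by presburger
qed

lemma coarse_structure_coarse_mod_small:
  assumes unc: "uncountable (UNIV :: 'a set)"
    and Q_singleton: "\<And>x. Q {x}"
    and Q_UN: "\<And>I A. Q I \<Longrightarrow> (\<And>i. i \<in> I \<Longrightarrow> Q (A i)) \<Longrightarrow> Q (\<Union>i\<in>I. A i)"
    and Q_countable: "\<And>A. Q A \<Longrightarrow> countable A"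
  shows "coarse_structure (UNIV :: 'a set) (coarse_mod_small Q)"
  unfolding coarse_structure_def
proof (intro conjI ballI allI impI)
  have "entourage UNIV (Id_on (UNIV :: 'a set))" by (simp add: entourage_def)
  moreover have "{} \<in> (small_sets :: 'a set set)" using countable_in_small_sets[OF unc] by simp
  moreover have "fibrewise Q Id" using Q_singleton by (rule fibrewise_Id)
  moreover have "Id_on UNIV \<subseteq> {} \<times> {} \<union> Id" by auto
  ultimately show "Id_on UNIV \<in> coarse_mod_small Q" by (rule coarse_mod_smallI)
next
  fix e assume "e \<in> coarse_mod_small Q"
  then show "entourage UNIV e" by (rule coarse_mod_smallE)
next
  fix e d assume e: "e \<in> coarse_mod_small Q" and d: "d \<in> coarse_mod_small Q"
  obtain S g where S: "entourage UNIV e" "S \<in> small_sets" "fibrewise Q g" "e \<subseteq> S \<times> S \<union> g"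
    using e by (rule coarse_mod_smallE)
  obtain T g' where T: "entourage UNIV d" "T \<in> small_sets" "fibrewise Q g'" "d \<subseteq> T \<times> T \<union> g'"
    using d by (rule coarse_mod_smallE)
  let ?U = "S \<union> T \<union> g' `` S \<union> g\<inverse> `` T"
  have fibres_countable: "countable (h `` {x})" if "fibrewise Q h" for h x
  proof -
    have "Q (h `` {x})" using that by (simp add: fibrewise_def)
    then show ?thesis by (rule Q_countable)
  qed
  have inf: "infinite (UNIV :: 'a set)" using unc countable_finite by blast
  have "entourage UNIV (e O d)" using S(1) T(1) unfolding entourage_def by auto
  moreover have "?U \<in> small_sets"
  proof -
    have "g' `` S \<in> small_sets" "g\<inverse> `` T \<in> small_sets"
      using small_sets_Image[OF unc S(2) fibres_countable[OF T(3)]]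
        small_sets_Image[OF unc T(2) fibres_countable[OF fibrewise_converse[OF S(3)]]] .
    then show ?thesis using S(2) T(2) by (simp add: small_sets_Un[OF inf])
  qed
  moreover have "fibrewise Q (g O g')" by (rule fibrewise_relcomp[OF Q_UN S(3) T(3)])
  moreover have "e O d \<subseteq> ?U \<times> ?U \<union> g O g'"
  proof
    fix p assume "p \<in> e O d"
    then obtain x y z where "p = (x, z)" "(x, y) \<in> S \<times> S \<union> g" "(y, z) \<in> T \<times> T \<union> g'"
      using S(4) T(4) by blast
    then show "p \<in> ?U \<times> ?U \<union> g O g'" by blast
  qed
  ultimately show "e O d \<in> coarse_mod_small Q" by (rule coarse_mod_smallI)
next
  fix e assume "e \<in> coarse_mod_small Q"
  then obtain S g where "entourage UNIV e" "S \<in> small_sets" "fibrewise Q g" "e \<subseteq> S \<times> S \<union> g"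
    by (rule coarse_mod_smallE)
  moreover have "e\<inverse> \<subseteq> S \<times> S \<union> g\<inverse>" using \<open>e \<subseteq> S \<times> S \<union> g\<close> by auto
  moreover have "entourage UNIV (e\<inverse>)" using \<open>entourage UNIV e\<close> by (auto simp: entourage_def)
  ultimately show "e\<inverse> \<in> coarse_mod_small Q" by (blast intro: coarse_mod_smallI fibrewise_converse)
next
  fix e d assume "e \<in> coarse_mod_small Q" "entourage UNIV d \<and> d \<subseteq> e"
  then show "d \<in> coarse_mod_small Q" by (meson coarse_mod_smallE coarse_mod_smallI order_trans)
qed

lemma coarse_structure_finite_mod_small:
  "uncountable (UNIV :: 'a set) \<Longrightarrow> coarse_structure (UNIV :: 'a set) (coarse_mod_small finite)"
  by (rule coarse_structure_coarse_mod_small) (simp_all add: countable_finite)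

lemma coarse_structure_countable_mod_small:
  "uncountable (UNIV :: 'a set) \<Longrightarrow> coarse_structure (UNIV :: 'a set) (coarse_mod_small countable)"
  by (rule coarse_structure_coarse_mod_small) (simp_all add: countable_UN)

lemma coarse_mod_small_unbounded:
  assumes unc: "uncountable (UNIV :: 'a set)" and Q_countable: "\<And>A. Q A \<Longrightarrow> countable A"
  shows "\<not> bounded_in (UNIV :: 'a set) (coarse_mod_small Q) UNIV"
proof
  assume "bounded_in (UNIV :: 'a set) (coarse_mod_small Q) UNIV"
  then obtain x :: 'a and e where "e \<in> coarse_mod_small Q" "UNIV \<subseteq> e `` {x}"
    unfolding bounded_in_def by blast
  moreover obtain S g where "S \<in> small_sets" "fibrewise Q g" "e \<subseteq> S \<times> S \<union> g"
    using \<open>e \<in> coarse_mod_small Q\<close> by (rule coarse_mod_smallE)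
  ultimately have "UNIV \<subseteq> S \<union> g `` {x}" by blast
  moreover have "S \<union> g `` {x} \<in> small_sets"
  proof (rule small_sets_Un)
    show "infinite (UNIV :: 'a set)" using unc countable_finite by blast
    show "S \<in> small_sets" by fact
    show "g `` {x} \<in> small_sets"
      using \<open>fibrewise Q g\<close> Q_countable countable_in_small_sets[OF unc] by (simp add: fibrewise_def)
  qed
  ultimately have "(UNIV :: 'a set) \<in> small_sets" by (rule small_sets_subset)
  then show False by (simp add: UNIV_not_in_small_sets)
qed

lemma discrete_coarse_subset_finite_mod_small:
  assumes unc: "uncountable (UNIV :: 'a set)"
  shows "discrete_coarse (UNIV :: 'a set) small_sets \<subseteq> coarse_mod_small finite"
proof
  fix e :: "('a \<times> 'a) set" assume "e \<in> discrete_coarse UNIV small_sets"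
  then obtain B where B: "entourage UNIV e" "B \<in> small_sets" "e \<subseteq> E_bor UNIV B"
    unfolding discrete_coarse_def by blast
  have "fibrewise finite Id" by (simp add: fibrewise_def)
  moreover have "e \<subseteq> B \<times> B \<union> Id" using B(3) by (auto simp: E_bor_def)
  ultimately show "e \<in> coarse_mod_small finite" by (rule coarse_mod_smallI[OF B(1,2)])
qed

lemma fibrewise_finite_E_perm:
  assumes "finite H" "\<And>h. h \<in> H \<Longrightarrow> bij h"
  shows "fibrewise finite (E_perm H)"
proof -
  have "(E_perm H)\<inverse> `` {x} \<subseteq> (\<lambda>h. inv h x) ` H" for x
  proof
    fix y assume "y \<in> (E_perm H)\<inverse> `` {x}"
    then obtain h where "h \<in> H" "x = h y" by (auto simp: E_perm_def)
    moreover from this have "y = inv h x" using assms(2) by (simp add: bij_def inv_f_f)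
    ultimately show "y \<in> (\<lambda>h. inv h x) ` H" by blast
  qed
  then have "finite ((E_perm H)\<inverse> `` {x})" for x
    using assms(1) by (meson finite_imageI finite_subset)
  then show ?thesis using assms(1) by (simp add: fibrewise_def Image_E_perm)
qed

lemma perm_coarse_subset_finite_mod_small:
  assumes unc: "uncountable (UNIV :: 'a set)"
  shows "perm_coarse \<subseteq> (coarse_mod_small finite :: ('a \<times> 'a) set set)"
proof
  fix e :: "('a \<times> 'a) set" assume "e \<in> perm_coarse"
  then obtain H where H: "entourage UNIV e" "finite H" "\<And>h. h \<in> H \<Longrightarrow> bij h" "e \<subseteq> E_perm H"
    unfolding perm_coarse_def by blast
  have "{} \<in> (small_sets :: 'a set set)" using countable_in_small_sets[OF unc] by simp
  moreover have "e \<subseteq> {} \<times> {} \<union> E_perm H" using H(4) by simp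
  ultimately show "e \<in> coarse_mod_small finite"
    using coarse_mod_smallI[OF H(1) _ fibrewise_finite_E_perm[OF H(2,3)]] by blast
qed

abbreviation perm_small_coarse :: "('a \<times> 'a) set set" where
  "perm_small_coarse \<equiv> coarse_join UNIV (discrete_coarse UNIV small_sets) perm_coarse"

lemma perm_small_coarse_subset_finite_mod_small:
  "uncountable (UNIV :: 'a set) \<Longrightarrow> perm_small_coarse \<subseteq> (coarse_mod_small finite :: ('a \<times> 'a) set set)"
  by (intro coarse_join_least coarse_structure_finite_mod_small
      discrete_coarse_subset_finite_mod_small perm_coarse_subset_finite_mod_small)

lemma perm_coarse_psubset_perm_small_coarse:
  assumes unc: "uncountable (UNIV :: 'a set)"
  shows "perm_coarse \<subset> (perm_small_coarse :: ('a \<times> 'a) set set)"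
proof (rule psubsetI)
  show "perm_coarse \<subseteq> (perm_small_coarse :: ('a \<times> 'a) set set)" by (rule coarse_join_upper2)
  obtain N :: "'a set" where N: "countable N" "infinite N"
    using unc by (meson countable_finite infinite_countable_subset')
  obtain n where "n \<in> N" using N(2) by (metis ex_in_conv finite.emptyI)
  have "E_bor UNIV N \<in> discrete_coarse UNIV small_sets"
    by (rule E_bor_in_discrete_coarse[OF subset_UNIV countable_in_small_sets[OF unc N(1)]])
  then have "E_bor UNIV N \<in> perm_small_coarse" by (rule subsetD[OF coarse_join_upper1])
  moreover have "E_bor UNIV N \<notin> perm_coarse"
  proof
    assume "E_bor UNIV N \<in> perm_coarse"
    then have "finite (E_bor UNIV N `` {n})" by (simp add: finite_Image_perm_coarse)
    moreover have "N \<subseteq> E_bor UNIV N `` {n}" using \<open>n \<in> N\<close> by (auto simp: E_bor_def)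
    ultimately show False using N(2) by (meson finite_subset)
  qed
  ultimately show "perm_coarse \<noteq> (perm_small_coarse :: ('a \<times> 'a) set set)" by metis
qed

lemma bounded_in_perm_small_coarse_if_small:
  fixes A :: "'a set"
  assumes unc: "uncountable (UNIV :: 'a set)" and A: "A \<in> small_sets"
  shows "bounded_in UNIV perm_small_coarse A"
proof -
  fix x :: 'a
  have "{x} \<union> A \<in> small_sets"
    using countable_finite unc by (intro small_sets_Un A countable_in_small_sets) auto
  then have "E_bor UNIV ({x} \<union> A) \<in> discrete_coarse UNIV small_sets"
    by (rule E_bor_in_discrete_coarse[OF subset_UNIV])
  then have "E_bor UNIV ({x} \<union> A) \<in> perm_small_coarse" by (rule subsetD[OF coarse_join_upper1])
  moreover have "A \<subseteq> E_bor UNIV ({x} \<union> A) `` {x}" by (auto simp: E_bor_def)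
  ultimately show ?thesis unfolding bounded_in_def by blast
qed

lemma bij_cover_if_not_small:
  fixes A :: "'a set"
  assumes "A \<notin> small_sets"
  obtains h where "bij h" "UNIV = A \<union> h ` A"
proof -
  obtain f where f: "inj_on f (- A)" "f ` (- A) \<subseteq> A"
    using inj_into_not_small_set[OF assms] by blast
  then obtain h where h: "bij h" "\<And>x. x \<in> - A \<Longrightarrow> h x = f x"
    using bij_extending_inj_on[of f "- A"] by blast
  have "- A \<subseteq> inv h ` A"
  proof
    fix z assume "z \<in> - A"
    then have "h z \<in> A" using f(2) h(2) by auto
    moreover have "z = inv h (h z)" using h(1) by (simp add: bij_def)
    ultimately show "z \<in> inv h ` A" by blast
  qed
  then show thesis using that[of "inv h"] h(1) bij_imp_bij_inv by blast
qed

lemma extremely_normal_perm_small_coarse: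
  assumes unc: "uncountable (UNIV :: 'a set)"
  shows "extremely_normal (UNIV :: 'a set) perm_small_coarse"
  unfolding extremely_normal_def unbounded_ballean_def
proof (intro conjI allI impI)
  have "\<not> bounded_in UNIV (coarse_mod_small finite) (UNIV :: 'a set)"
    using unc countable_finite by (rule coarse_mod_small_unbounded)
  then show "\<not> bounded_in UNIV perm_small_coarse (UNIV :: 'a set)"
    using bounded_in_mono[OF perm_small_coarse_subset_finite_mod_small[OF unc]] by metis
next
  fix A :: "'a set" assume "A \<subseteq> UNIV \<and> \<not> bounded_in UNIV perm_small_coarse A"
  then have "A \<notin> small_sets" using bounded_in_perm_small_coarse_if_small[OF unc] by metis
  then obtain h where "bij h" "UNIV = A \<union> h ` A" by (rule bij_cover_if_not_small)
  then have "E_perm {id, h} \<in> perm_small_coarse" "UNIV = E_perm {id, h} `` A"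
    by (simp_all add: Image_E_perm_id_bij subsetD[OF coarse_join_upper2] E_perm_id_bij_in_perm_coarse)
  then show "large_in UNIV perm_small_coarse A" unfolding large_in_def by blast
qed

lemma countably_infinite_fibres:
  assumes "infinite (UNIV :: 'a set)"
  shows "\<exists>q :: 'a \<Rightarrow> 'a. \<forall>a. countable (q -` {a}) \<and> infinite (q -` {a})"
proof -
  have "|UNIV :: nat set| \<le>o |UNIV :: 'a set|" using assms infinite_iff_card_of_nat by blast
  then have "|(UNIV :: 'a set) \<times> (UNIV :: nat set)| =o |UNIV :: 'a set|"
    using card_of_Times_infinite[OF assms] by blast
  then obtain \<psi> :: "'a \<times> nat \<Rightarrow> 'a" where "bij_betw \<psi> (UNIV \<times> UNIV) UNIV"
    using card_of_ordIso by blast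
  then have \<psi>: "bij \<psi>" by simp
  have fibre: "(fst \<circ> inv \<psi>) -` {a} = \<psi> ` ({a} \<times> UNIV)" for a
  proof
    show "(fst \<circ> inv \<psi>) -` {a} \<subseteq> \<psi> ` ({a} \<times> UNIV)"
    proof
      fix x assume "x \<in> (fst \<circ> inv \<psi>) -` {a}"
      then have "inv \<psi> x = (a, snd (inv \<psi> x))" by (cases "inv \<psi> x") simp
      then have "x = \<psi> (a, snd (inv \<psi> x))" using \<psi> by (metis bij_def surj_f_inv_f)
      then show "x \<in> \<psi> ` ({a} \<times> UNIV)" by blast
    qed
    show "\<psi> ` ({a} \<times> UNIV) \<subseteq> (fst \<circ> inv \<psi>) -` {a}"
      using \<psi> by (auto simp: bij_def inv_f_f)
  qed
  have "countable ((fst \<circ> inv \<psi>) -` {a})" for a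
    unfolding fibre by (intro countable_image countable_SIGMA) auto
  moreover have "inj_on \<psi> ({a} \<times> UNIV)" for a using \<psi> by (meson bij_is_inj inj_on_subset subset_UNIV)
  then have "infinite ((fst \<circ> inv \<psi>) -` {a})" for a
    unfolding fibre by (simp add: finite_image_iff finite_cartesian_product_iff)
  ultimately show ?thesis by blast
qed

lemma not_maximal_perm_small_coarse:
  assumes unc: "uncountable (UNIV :: 'a set)"
  shows "\<not> maximal_ballean (UNIV :: 'a set) perm_small_coarse"
proof -
  have "infinite (UNIV :: 'a set)" using unc countable_finite by blast
  then obtain q :: "'a \<Rightarrow> 'a" where q: "\<And>a. countable (q -` {a})" "\<And>a. infinite (q -` {a})"
    using countably_infinite_fibres by blast
  define w where "w = {(x, y). q x = q y}"
  have w_fibre: "w `` {x} = q -` {q x}" "w\<inverse> `` {x} = q -` {q x}" for x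
    by (auto simp: w_def)
  have "w \<in> coarse_mod_small countable"
  proof (rule coarse_mod_smallI)
    show "entourage UNIV w" by (auto simp: entourage_def w_def)
    show "{} \<in> (small_sets :: 'a set set)" using countable_in_small_sets[OF unc] by simp
    show "fibrewise countable w" using q(1) by (simp add: fibrewise_def w_fibre)
    show "w \<subseteq> {} \<times> {} \<union> w" by simp
  qed
  moreover have "w \<notin> coarse_mod_small finite"
  proof
    assume "w \<in> coarse_mod_small finite"
    then obtain S g where "S \<in> small_sets" "fibrewise finite g" "w \<subseteq> S \<times> S \<union> g"
      by (rule coarse_mod_smallE)
    moreover have "S \<noteq> UNIV" using \<open>S \<in> small_sets\<close> by (metis UNIV_not_in_small_sets)
    then obtain x where "x \<notin> S" by blast
    ultimately have "w `` {x} \<subseteq> g `` {x}" "finite (g `` {x})" by (auto simp: fibrewise_def)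
    then have "finite (q -` {q x})" unfolding w_fibre by (rule finite_subset)
    then show False using q(2) by blast
  qed
  moreover have "(perm_small_coarse :: ('a \<times> 'a) set set) \<subseteq> coarse_mod_small countable"
  proof -
    have "coarse_mod_small finite \<subseteq> coarse_mod_small countable"
      by (rule coarse_mod_small_mono) (rule countable_finite)
    with perm_small_coarse_subset_finite_mod_small[OF unc] show ?thesis by (rule order_trans)
  qed
  ultimately have "(perm_small_coarse :: ('a \<times> 'a) set set) \<subset> coarse_mod_small countable"
    using perm_small_coarse_subset_finite_mod_small[OF unc] by blast
  then show ?thesis
    using coarse_structure_countable_mod_small[OF unc] coarse_mod_small_unbounded[OF unc]
    unfolding maximal_ballean_def by blast
qed

theorem mainTheorem9:
  assumes "uncountable (UNIV :: 'a set)"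
  shows "(\<forall>Y :: 'a set. bounded_in UNIV perm_coarse Y \<longleftrightarrow> finite Y)
    \<and> ultranormal (UNIV :: 'a set) perm_coarse
    \<and> \<not> extremely_normal (UNIV :: 'a set) perm_coarse
    \<and> perm_coarse \<subset> coarse_join UNIV (discrete_coarse UNIV small_sets) (perm_coarse :: ('a \<times> 'a) set set)
    \<and> extremely_normal (UNIV :: 'a set) (coarse_join UNIV (discrete_coarse UNIV small_sets) perm_coarse)
    \<and> \<not> maximal_ballean (UNIV :: 'a set) (coarse_join UNIV (discrete_coarse UNIV small_sets) perm_coarse)"
proof -
  have "infinite (UNIV :: 'a set)" using assms countable_finite by blast
  then show ?thesis
    using bounded_in_perm_coarse_iff ultranormal_perm_coarse
      not_extremely_normal_perm_coarse[OF assms] perm_coarse_psubset_perm_small_coarse[OF assms]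
      extremely_normal_perm_small_coarse[OF assms] not_maximal_perm_small_coarse[OF assms]
    by blast
qed

end
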